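(* Let $G=(V,E)$ be a strongly connected digraph and $s\in V$. Let $r$ be a marked vertex and let $v$ be a vertex that is not a descendant of $r$ in $D(s)$. Then there is a path in $G$ from $v$ to $r$ that contains no vertex of $T(r)\setminus\{r\}$. Moreover, every simple path in $G$ from $v$ to any vertex of $T(r)$ contains the edge $(d(r),r)$.
   Context: For a digraph $G=(V,E)$ and $s\in V$ with every vertex reachable from $s$, $G(s)$ is the flow graph with start vertex $s$; $u$ dominates $w$ if every path from $s$ to $w$ contains $u$; the dominator tree $D(s)$ is the rooted tree on $V$ with root $s$ in which $u$ is an ancestor of $w$ iff $u$ dominates $w$; $d(w)$ is the parent of $w\neq s$. An edge $(u,w)$ is a bridge of $G(s)$ if every path from $s$ to $w$ contains it (then $u=d(w)$). A vertex $w\neq s$ is marked if $(d(w),w)$ is a bridge of $G(s)$. Deleting from $D(s)$ all edges $(d(w),w)$ with $w$ marked decomposes $D(s)$ into a forest of subtrees, each rooted at $s$ or at a marked vertex; $T(v)$ denotes the subtree containing $v$. *)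

theory Defs
  imports Main
begin

definition digraph :: "'a set \<Rightarrow> ('a \<times> 'a) set \<Rightarrow> bool" where
  "digraph V E \<longleftrightarrow> finite V \<and> E \<subseteq> V \<times> V"

definition is_path :: "'a set \<Rightarrow> ('a \<times> 'a) set \<Rightarrow> 'a list \<Rightarrow> 'a \<Rightarrow> 'a \<Rightarrow> bool" where
  "is_path V E p u w \<longleftrightarrow> p \<noteq> [] \<and> hd p = u \<and> last p = w \<and> set p \<subseteq> V \<and>
     (\<forall>i. Suc i < length p \<longrightarrow> (p ! i, p ! Suc i) \<in> E)"

definition simple_path :: "'a set \<Rightarrow> ('a \<times> 'a) set \<Rightarrow> 'a list \<Rightarrow> 'a \<Rightarrow> 'a \<Rightarrow> bool" where
  "simple_path V E p u w \<longleftrightarrow> is_path V E p u w \<and> distinct p"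

definition path_has_edge :: "'a list \<Rightarrow> 'a \<times> 'a \<Rightarrow> bool" where
  "path_has_edge p e \<longleftrightarrow> (\<exists>i. Suc i < length p \<and> (p ! i, p ! Suc i) = e)"

definition strongly_connected :: "'a set \<Rightarrow> ('a \<times> 'a) set \<Rightarrow> bool" where
  "strongly_connected V E \<longleftrightarrow> (\<forall>u\<in>V. \<forall>w\<in>V. \<exists>p. is_path V E p u w)"

definition dominates :: "'a set \<Rightarrow> ('a \<times> 'a) set \<Rightarrow> 'a \<Rightarrow> 'a \<Rightarrow> 'a \<Rightarrow> bool" where
  "dominates V E s u w \<longleftrightarrow> u \<in> V \<and> w \<in> V \<and> (\<forall>p. is_path V E p s w \<longrightarrow> u \<in> set p)"

text \<open>Parent d(w) of w in the dominator tree D(s): the immediate dominator.\<close>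
definition idom :: "'a set \<Rightarrow> ('a \<times> 'a) set \<Rightarrow> 'a \<Rightarrow> 'a \<Rightarrow> 'a" where
  "idom V E s w = (THE u. u \<noteq> w \<and> dominates V E s u w \<and>
      (\<forall>x. dominates V E s x w \<and> x \<noteq> w \<longrightarrow> dominates V E s x u))"

definition is_bridge :: "'a set \<Rightarrow> ('a \<times> 'a) set \<Rightarrow> 'a \<Rightarrow> 'a \<times> 'a \<Rightarrow> bool" where
  "is_bridge V E s e \<longleftrightarrow> e \<in> E \<and> (\<forall>p. is_path V E p s (snd e) \<longrightarrow> path_has_edge p e)"

definition marked :: "'a set \<Rightarrow> ('a \<times> 'a) set \<Rightarrow> 'a \<Rightarrow> 'a \<Rightarrow> bool" where
  "marked V E s w \<longleftrightarrow> w \<in> V \<and> w \<noteq> s \<and> is_bridge V E s (idom V E s w, w)"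

definition forest_edges :: "'a set \<Rightarrow> ('a \<times> 'a) set \<Rightarrow> 'a \<Rightarrow> ('a \<times> 'a) set" where
  "forest_edges V E s = {(idom V E s w, w) | w. w \<in> V \<and> w \<noteq> s \<and> \<not> marked V E s w}"

definition subtree_T :: "'a set \<Rightarrow> ('a \<times> 'a) set \<Rightarrow> 'a \<Rightarrow> 'a \<Rightarrow> 'a set" where
  "subtree_T V E s v = {w. (v, w) \<in> (forest_edges V E s \<union> (forest_edges V E s)\<inverse>)\<^sup>*}"

end

theory Submission
  imports Defs
begin

(* Every vertex x of T(r) is dominated by r: inside the forest one only
   moves along unmarked tree edges (d(w),w), and walking down such an edge keeps
   domination by r, while walking up from a vertex w \<noteq> r reaches d(w), which is
   still dominated by r because the dominators of w form a chain.
   Now take any path from v (not dominated by r) to a vertex dominated by r and look at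
   the first vertex y0 on it dominated by r, with predecessor y.  Since y is not
   dominated by r there is an s-y path avoiding r; extending it by y0 shows y0 = r.
   The prefix up to r therefore avoids T(r) - {r}, which is the first claim.  For the
   second claim, the same s-y path extended by r must contain the bridge (d(r),r), and
   as r does not occur before its last vertex, y = d(r); so the path contains (d(r),r). *)

lemma path_single: "is_path V E [x] u w \<longleftrightarrow> x = u \<and> w = u \<and> u \<in> V"
  by (auto simp: is_path_def)

lemma path_Cons2:
  "is_path V E (x # y # p) u w \<longleftrightarrow> x = u \<and> x \<in> V \<and> (x, y) \<in> E \<and> is_path V E (y # p) y w"
  unfolding is_path_def by (auto simp: less_Suc_eq_0_disj All_less_Suc2)

lemma path_ends: "is_path V E p u w \<Longrightarrow> u \<in> V \<and> w \<in> V"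
  unfolding is_path_def by (metis hd_in_set last_in_set subsetD)

lemma path_split_iff:
  "is_path V E (xs @ x # ys) u w \<longleftrightarrow> is_path V E (xs @ [x]) u x \<and> is_path V E (x # ys) x w"
proof (induction xs arbitrary: u)
  case Nil
  then show ?case by (auto simp: path_single dest: path_ends) (auto simp: is_path_def)
next
  case (Cons a xs)
  show ?case
  proof (cases xs)
    case Nil
    then show ?thesis by (auto simp: path_Cons2 path_single dest: path_ends)
  next
    case (Cons b xs')
    then show ?thesis using Cons.IH[of b] by (auto simp: path_Cons2)
  qed
qed

lemma path_append:
  assumes p: "is_path V E p u x" and q: "is_path V E q x w"
  shows "is_path V E (p @ tl q) u w"
proof -
  have p_split: "p = butlast p @ [x]" and q_split: "q = x # tl q"
    using p q unfolding is_path_def by (metis append_butlast_last_id, metis list.collapse)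
  have "p @ tl q = butlast p @ x # tl q" by (subst p_split) simp
  then show ?thesis using p q path_split_iff[of V E "butlast p" x "tl q" u w]
    by (simp add: p_split[symmetric] q_split[symmetric])
qed

lemma path_snoc: "is_path V E p u x \<Longrightarrow> (x, y) \<in> E \<Longrightarrow> y \<in> V \<Longrightarrow> is_path V E (p @ [y]) u y"
  using path_append[of V E p u x "[x, y]" y] path_ends[of V E p u x]
  by (simp add: path_Cons2 path_single)

lemma path_has_edge_entry: "ys \<noteq> [] \<Longrightarrow> path_has_edge (ys @ r # zs) (last ys, r)"
  unfolding path_has_edge_def
  by (rule exI[of _ "length ys - 1"]) (simp add: nth_append last_conv_nth)

lemma path_has_edge_last:
  assumes e: "path_has_edge (P @ [r]) (d, r)" and r: "r \<notin> set P"
  shows "d = last P"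
proof -
  obtain i where i: "Suc i < length (P @ [r])" "(P @ [r]) ! i = d" "(P @ [r]) ! Suc i = r"
    using e by (auto simp: path_has_edge_def)
  have "\<not> Suc i < length P"
    using i(3) r by (metis nth_append nth_mem)
  then have "Suc i = length P" using i(1) by simp
  then show ?thesis using i(2) by (metis diff_Suc_1 last_conv_nth lessI nth_append Zero_not_Suc list.size(3))
qed

lemma dom_refl: "u \<in> V \<Longrightarrow> dominates V E s u u"
  by (auto simp: dominates_def is_path_def)

lemma dom_start: "s \<in> V \<Longrightarrow> w \<in> V \<Longrightarrow> dominates V E s s w"
  by (auto simp: dominates_def is_path_def)

lemma path_avoiding: "\<not> dominates V E s r v \<Longrightarrow> r \<in> V \<Longrightarrow> v \<in> V \<Longrightarrow> \<exists>p. is_path V E p s v \<and> r \<notin> set p"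
  by (auto simp: dominates_def)

lemma dom_trans:
  assumes ab: "dominates V E s a b" and bc: "dominates V E s b c"
  shows "dominates V E s a c"
  unfolding dominates_def
proof (intro conjI allI impI)
  show "a \<in> V" "c \<in> V" using ab bc by (auto simp: dominates_def)
  fix p assume p: "is_path V E p s c"
  then have "b \<in> set p" using bc by (auto simp: dominates_def)
  then obtain xs ys where split: "p = xs @ b # ys" by (meson split_list)
  then have "is_path V E (xs @ [b]) s b" using p path_split_iff by metis
  then have "a \<in> set (xs @ [b])" using ab by (auto simp: dominates_def)
  then show "a \<in> set p" using split by auto
qed

text \<open>When every vertex is reachable from s, dominance is antisymmetric: take an s-a path
  in which a occurs only at the end; b lies on it before a, and so a would have to lie
  on its strictly shorter prefix ending in b.\<close>
lemma dom_antisym: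
  assumes sc: "strongly_connected V E" and sV: "s \<in> V"
    and ab: "dominates V E s a b" and ba: "dominates V E s b a"
  shows "a = b"
proof (rule ccontr)
  assume ne: "a \<noteq> b"
  have "a \<in> V" using ab by (auto simp: dominates_def)
  then obtain p where p: "is_path V E p s a" using sc sV by (auto simp: strongly_connected_def)
  then have "a \<in> set p" unfolding is_path_def by (metis last_in_set)
  then obtain xs ys where xs: "p = xs @ a # ys" "a \<notin> set xs" by (meson split_list_first)
  then have q: "is_path V E (xs @ [a]) s a" using p path_split_iff by metis
  then have "b \<in> set xs" using ba ne by (auto simp: dominates_def)
  then obtain xs1 xs2 where xs1: "xs = xs1 @ b # xs2" by (meson split_list)
  then have "is_path V E (xs1 @ [b]) s b" using q path_split_iff[of V E xs1 b "xs2 @ [a]" s a] by simp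
  then have "a \<in> set (xs1 @ [b])" using ab by (auto simp: dominates_def)
  then show False using xs xs1 ne by auto
qed

text \<open>Otherwise there are an s-b path avoiding a
  and an s-a path avoiding b; completing either by a suitable piece of an a-w path gives
  an s-w path missing a or b.\<close>
lemma dom_total:
  assumes sc: "strongly_connected V E"
    and aw: "dominates V E s a w" and bw: "dominates V E s b w"
  shows "dominates V E s a b \<or> dominates V E s b a"
proof (rule ccontr)
  assume "\<not> (dominates V E s a b \<or> dominates V E s b a)"
  then have nab: "\<not> dominates V E s a b" and nba: "\<not> dominates V E s b a" by auto
  have aV: "a \<in> V" and bV: "b \<in> V" and wV: "w \<in> V" using aw bw by (auto simp: dominates_def)
  obtain P where P: "is_path V E P s b" "a \<notin> set P" using path_avoiding[OF nab aV bV] by blast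
  obtain Q where Q: "is_path V E Q s a" "b \<notin> set Q" using path_avoiding[OF nba bV aV] by blast
  obtain S where S: "is_path V E S a w" using sc aV wV by (auto simp: strongly_connected_def)
  have "b \<in> set (Q @ tl S)" using path_append[OF Q(1) S] bw by (auto simp: dominates_def)
  then have "b \<in> set S" using Q(2) by (cases S) auto
  then obtain xs ys where xs: "S = xs @ b # ys" "b \<notin> set ys" by (meson split_list_last)
  then have bys: "is_path V E (b # ys) b w" using S path_split_iff by metis
  show False
  proof (cases "a \<in> set ys")
    case False
    have "a \<in> set (P @ ys)" using path_append[OF P(1) bys] aw by (auto simp: dominates_def)
    then show False using P(2) False by auto
  next
    case True
    then obtain zs us where zs: "ys = zs @ a # us" by (meson split_list)
    then have "is_path V E (a # us) a w" using bys path_split_iff[of V E "b # zs" a us b w] by simp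
    then have "b \<in> set (Q @ us)" using path_append[OF Q(1)] bw by (fastforce simp: dominates_def)
    then show False using Q(2) xs zs by auto
  qed
qed

text \<open>Existence of the immediate dominator: among the finitely many strict dominators of w
  (s is one of them), one dominated by the largest number of them is dominated by all
  of them, since the strict dominators form a chain.\<close>
lemma idom_exists:
  assumes dg: "digraph V E" and sc: "strongly_connected V E" and sV: "s \<in> V"
    and wV: "w \<in> V" and ws: "w \<noteq> s"
  shows "\<exists>u. u \<noteq> w \<and> dominates V E s u w \<and>
      (\<forall>x. dominates V E s x w \<and> x \<noteq> w \<longrightarrow> dominates V E s x u)"
proof -
  define D where "D = {u. u \<noteq> w \<and> dominates V E s u w}"
  define A where "A u = {x \<in> D. dominates V E s x u}" for u
  have finD: "finite D"
    using dg finite_subset[of D V] unfolding D_def dominates_def digraph_def by blast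
  have "s \<in> D" using ws dom_start[OF sV wV] unfolding D_def by auto
  define m where "m = Max ((\<lambda>u. card (A u)) ` D)"
  obtain u where uD: "u \<in> D" and um: "card (A u) = m"
    using Max_in[of "(\<lambda>u. card (A u)) ` D"] finD \<open>s \<in> D\<close> unfolding m_def by fastforce
  have umax: "card (A y) \<le> card (A u)" if "y \<in> D" for y
    using finD that unfolding um m_def by simp
  have "dominates V E s x u" if x: "dominates V E s x w" "x \<noteq> w" for x
  proof (rule ccontr)
    assume nxu: "\<not> dominates V E s x u"
    have xD: "x \<in> D" using x unfolding D_def by auto
    have "dominates V E s u x" using dom_total[OF sc x(1), of u] uD nxu unfolding D_def by auto
    then have "A u \<subseteq> A x" unfolding A_def using dom_trans by auto
    moreover have "x \<in> A x - A u" using xD nxu dom_refl[of x V E s] x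
      unfolding A_def dominates_def by auto
    ultimately have "card (A u) < card (A x)"
      using finD unfolding A_def by (intro psubset_card_mono) auto
    then show False using umax[OF xD] by simp
  qed
  then show ?thesis using uD unfolding D_def by auto
qed

text \<open>By antisymmetry the immediate dominator is unique, so idom w is that vertex.\<close>
lemma idom_props:
  assumes dg: "digraph V E" and sc: "strongly_connected V E" and sV: "s \<in> V"
    and wV: "w \<in> V" and ws: "w \<noteq> s"
  shows "idom V E s w \<noteq> w \<and> dominates V E s (idom V E s w) w \<and>
      (\<forall>x. dominates V E s x w \<and> x \<noteq> w \<longrightarrow> dominates V E s x (idom V E s w))"
proof -
  have "\<exists>!u. u \<noteq> w \<and> dominates V E s u w \<and>
      (\<forall>x. dominates V E s x w \<and> x \<noteq> w \<longrightarrow> dominates V E s x u)"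
    using idom_exists[OF assms] dom_antisym[OF sc sV] by blast
  then show ?thesis unfolding idom_def by (rule theI')
qed

text \<open>Moving down an unmarked tree edge keeps domination by r; moving up from w to d(w)
  is only possible for unmarked w, hence w \<noteq> r, and d(w) is then still dominated by r.\<close>
lemma subtree_T_dominated:
  assumes dg: "digraph V E" and sc: "strongly_connected V E" and sV: "s \<in> V"
    and mr: "marked V E s r" and x: "x \<in> subtree_T V E s r"
  shows "dominates V E s r x"
proof -
  let ?F = "forest_edges V E s"
  have "(r, x) \<in> (?F \<union> ?F\<inverse>)\<^sup>*" using x by (simp add: subtree_T_def)
  then show ?thesis
  proof (induction rule: rtrancl_induct)
    case base
    show ?case using mr dom_refl by (auto simp: marked_def)
  next
    case (step y z)
    from step.hyps(2) show ?case
    proof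
      assume "(y, z) \<in> ?F"
      then obtain w where w: "y = idom V E s w" "z = w" "w \<in> V" "w \<noteq> s"
        by (auto simp: forest_edges_def)
      then show ?case using idom_props[OF dg sc sV w(3,4)] dom_trans[OF step.IH] by auto
    next
      assume "(y, z) \<in> ?F\<inverse>"
      then obtain w where w: "z = idom V E s w" "y = w" "w \<in> V" "w \<noteq> s" "\<not> marked V E s w"
        by (auto simp: forest_edges_def)
      then have "w \<noteq> r" using mr by auto
      then show ?case using idom_props[OF dg sc sV w(3,4)] step.IH w by auto
    qed
  qed
qed

lemma path_enters_at:
  assumes p: "is_path V E p v x" and nv: "\<not> dominates V E s r v"
    and rV: "r \<in> V" and rx: "dominates V E s r x"
  shows "\<exists>ys zs. p = ys @ r # zs \<and> ys \<noteq> [] \<and> (\<forall>y\<in>set ys. \<not> dominates V E s r y)"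
proof -
  have "x \<in> set p" using p unfolding is_path_def by (metis last_in_set)
  then obtain ys y0 zs where sp: "p = ys @ y0 # zs" "dominates V E s r y0"
      "\<forall>y\<in>set ys. \<not> dominates V E s r y"
    using split_list_first_prop[of p "dominates V E s r"] rx by blast
  have ne: "ys \<noteq> []"
  proof
    assume "ys = []"
    then have "v = y0" using p sp(1) by (simp add: is_path_def)
    then show False using nv sp(2) by simp
  qed
  define y where "y = last ys"
  have "p = butlast ys @ y # y0 # zs" using sp(1) ne unfolding y_def by simp
  then have "is_path V E (y # y0 # zs) y x" using p path_split_iff by metis
  then have e: "(y, y0) \<in> E" and yV: "y \<in> V" and y0V: "y0 \<in> V"
    by (auto simp: path_Cons2 dest: path_ends)
  have "\<not> dominates V E s r y" using sp(3) ne y_def by simp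
  then obtain P where P: "is_path V E P s y" "r \<notin> set P" using path_avoiding[OF _ rV yV] by blast
  have "r \<in> set (P @ [y0])" using path_snoc[OF P(1) e y0V] sp(2) by (auto simp: dominates_def)
  then have "y0 = r" using P(2) by auto
  then show ?thesis using sp ne by blast
qed

text \<open>An edge into r from a vertex not dominated by r must be the bridge into r: an s-u path
  avoiding r, extended by r, contains the bridge, necessarily as its last edge.\<close>
lemma bridge_entry:
  assumes br: "is_bridge V E s (d, r)" and e: "(u, r) \<in> E" and uV: "u \<in> V" and rV: "r \<in> V"
    and nu: "\<not> dominates V E s r u"
  shows "u = d"
proof -
  obtain P where P: "is_path V E P s u" "r \<notin> set P" using path_avoiding[OF nu rV uV] by blast
  have "is_path V E (P @ [r]) s r" using path_snoc[OF P(1) e rV] .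
  then have "path_has_edge (P @ [r]) (d, r)" using br unfolding is_bridge_def by simp
  then have "d = last P" using P(2) by (rule path_has_edge_last)
  also have "last P = u" using P(1) by (simp add: is_path_def)
  finally show ?thesis by simp
qed

lemma path_uses_bridge:
  assumes p: "is_path V E p v x" and nv: "\<not> dominates V E s r v"
    and rV: "r \<in> V" and rx: "dominates V E s r x" and br: "is_bridge V E s (d, r)"
  shows "path_has_edge p (d, r)"
proof -
  obtain ys zs where ys: "p = ys @ r # zs" "ys \<noteq> []" "\<forall>y\<in>set ys. \<not> dominates V E s r y"
    using path_enters_at[OF p nv rV rx] by blast
  have "p = butlast ys @ last ys # r # zs" using ys(1,2) by simp
  then have "is_path V E (last ys # r # zs) (last ys) x"
    using p path_split_iff[of V E "butlast ys" "last ys" "r # zs" v x] by simp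
  then have "(last ys, r) \<in> E" and "last ys \<in> V" by (simp_all add: path_Cons2)
  moreover have "\<not> dominates V E s r (last ys)" using ys(2,3) by simp
  ultimately have "last ys = d" using bridge_entry[OF br _ _ rV] by blast
  then show ?thesis using path_has_edge_entry[OF ys(2)] ys(1) by simp
qed

text \<open>A path from a vertex not dominated by r to r whose vertices other than r are all
  outside the region dominated by r: cut any v-r path at its first entry into the region.\<close>
lemma path_to_entry:
  assumes sc: "strongly_connected V E" and vV: "v \<in> V" and rV: "r \<in> V"
    and nv: "\<not> dominates V E s r v"
  shows "\<exists>p. is_path V E p v r \<and> (\<forall>y\<in>set p. dominates V E s r y \<longrightarrow> y = r)"
proof -
  obtain p where p: "is_path V E p v r" using sc vV rV by (auto simp: strongly_connected_def)
  then obtain ys zs where ys: "p = ys @ r # zs" "\<forall>y\<in>set ys. \<not> dominates V E s r y"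
    using path_enters_at[OF p nv rV dom_refl[OF rV]] by blast
  have "is_path V E (ys @ [r]) v r" using p ys(1) path_split_iff[of V E ys r zs v r] by blast
  moreover have "\<forall>y\<in>set (ys @ [r]). dominates V E s r y \<longrightarrow> y = r" using ys(2) by auto
  ultimately show ?thesis by blast
qed

theorem mainTheorem7:
  fixes V :: "'a set" and E :: "('a \<times> 'a) set" and s r v :: 'a
  assumes "digraph V E"
    and "strongly_connected V E"
    and "s \<in> V"
    and "marked V E s r"
    and "v \<in> V"
    and "\<not> dominates V E s r v"
  shows "(\<exists>p. is_path V E p v r \<and> set p \<inter> (subtree_T V E s r - {r}) = {})
       \<and> (\<forall>w\<in>subtree_T V E s r. \<forall>p. simple_path V E p v w
              \<longrightarrow> path_has_edge p (idom V E s r, r))"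
proof
  note dg = assms(1) and sc = assms(2) and sV = assms(3) and mr = assms(4) and vV = assms(5)
    and nv = assms(6)
  have rV: "r \<in> V" and br: "is_bridge V E s (idom V E s r, r)" using mr by (simp_all add: marked_def)
  note T_below_r = subtree_T_dominated[OF dg sc sV mr]
  show "\<exists>p. is_path V E p v r \<and> set p \<inter> (subtree_T V E s r - {r}) = {}"
    using path_to_entry[OF sc vV rV nv] T_below_r by blast
  show "\<forall>w\<in>subtree_T V E s r. \<forall>p. simple_path V E p v w \<longrightarrow> path_has_edge p (idom V E s r, r)"
    using path_uses_bridge[OF _ nv rV T_below_r br] by (auto simp: simple_path_def)
qed

end
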